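(* Assume the setting in the context (deterministic $\Phi$ with $\operatorname{rank}(\widehat\Phi_1)=k$). Then for $i=1,\dots,k$, $$\sin\angle(\mathcal R(Q),\mathcal R(u_i))\le\frac{\delta_i^{2q+2}\|\widehat\Phi_2\widehat\Phi_1^\dagger\|_2}{\sqrt{1+\gamma^{4q+4}\|\widehat\Phi_2\widehat\Phi_1^\dagger\|_2^2}},\qquad \sin\angle(\mathcal R(P),\mathcal R(v_i))\le\frac{\delta_i^{2q+1}\|\widehat\Phi_2\widehat\Phi_1^\dagger\|_2}{\sqrt{1+\gamma^{4q+2}\|\widehat\Phi_2\widehat\Phi_1^\dagger\|_2^2}},$$ where $\angle(\mathcal X,\mathrm{span}\{x\})$ denotes the angle between the unit vector $x$ and the subspace $\mathcal X$, i.e. $\sin\angle=\|(I-\Pi_{\mathcal X})x\|_2$ with $\Pi_{\mathcal X}$ the orthogonal projector onto $\mathcal X$.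
   Context: Let $A\in\mathbb R^{m\times n}$ with $m\ge n$ have full SVD $A=U\Sigma V^T$, with singular values $\sigma_1\ge\sigma_2\ge\dots\ge\sigma_n\ge 0$. Fix an integer $k\ge1$ with $\sigma_k>0$ (the paper regards $A$ as having numerical rank $k$, i.e. $\sigma_k$ well separated from $\sigma_{k+1}$). Write $U=[U_k\ U_\perp]$ with $U_k\in\mathbb R^{m\times k}$ the first $k$ left singular vectors $u_1,\dots,u_k$, $U_\perp\in\mathbb R^{m\times(m-k)}$ the rest; $V=[V_k\ V_\perp]$ with $V_k\in\mathbb R^{n\times k}$ the first $k$ right singular vectors $v_1,\dots,v_k$; $\Sigma_k=\mathrm{diag}(\sigma_1,\dots,\sigma_k)$ and $\Sigma_\perp$ the remaining diagonal block of $\Sigma$ containing $\sigma_{k+1},\dots,\sigma_n$ (so $\|\Sigma_\perp\|_2=\sigma_{k+1}$, $\|\Sigma_\perp\|_F=(\sum_{i>k}\sigma_i^2)^{1/2}$). The notation $\|\cdot\|_{2,F}$ means the statement holds for both the spectral and Frobenius norm. Let $p\ge1$ be an oversampling integer, $d=k+p<n$, and $q\ge0$ an integer (power-iteration parameter). RU-QLP (Randomized Unpivoted QLP): given $\Phi\in\mathbb R^{m\times d}$, let $\bar P\in\mathbb R^{n\times d}$ have orthonormal columns spanning the range of $(A^TA)^qA^T\Phi$ (assumed of rank $d$); compute the thin unpivoted QR factorization $A\bar P=QR$ with $Q\in\mathbb R^{m\times d}$ having orthonormal columns and $R\in\mathbb R^{d\times d}$ upper triangular; compute the thin unpivoted QR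 factorization $R^T=\widetilde P\widetilde R$; set $P=\bar P\widetilde P\in\mathbb R^{n\times d}$ and $L=\widetilde R^T$ (lower triangular), giving $\hat A=QLP^T$. Partition $R=\begin{bmatrix}R_{11}&R_{12}\\0&R_{22}\end{bmatrix}$ and $L=\begin{bmatrix}L_{11}&0\\L_{21}&L_{22}\end{bmatrix}$ with $R_{11},L_{11}\in\mathbb R^{k\times k}$. Define $\widehat\Phi_1=U_k^T\Phi\in\mathbb R^{k\times d}$ and $\widehat\Phi_2=U_\perp^T\Phi\in\mathbb R^{(m-k)\times d}$, assume $\widehat\Phi_1$ has rank $k$, and let $\dagger$ denote the Moore–Penrose inverse. Set $\delta_i=\sigma_{k+1}/\sigma_i$ for $i=1,\dots,k$ and $\gamma=\sigma_n/\sigma_1$. *)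

theory Defs
  imports "Jordan_Normal_Form.Matrix" "Jordan_Normal_Form.DL_Rank"
begin

definition vnorm :: "real vec \<Rightarrow> real" where
  "vnorm x = sqrt (x \<bullet> x)"

definition spec_norm :: "real mat \<Rightarrow> real" where
  "spec_norm A = Sup {vnorm (A *\<^sub>v x) | x. x \<in> carrier_vec (dim_col A) \<and> vnorm x = 1}"

definition col_space :: "real mat \<Rightarrow> real vec set" where
  "col_space A = {A *\<^sub>v x | x. x \<in> carrier_vec (dim_col A)}"

definition orthonormal_cols :: "real mat \<Rightarrow> bool" where
  "orthonormal_cols A \<longleftrightarrow> transpose_mat A * A = 1\<^sub>m (dim_col A)"

definition is_pinv :: "real mat \<Rightarrow> real mat \<Rightarrow> bool" where
  "is_pinv A X \<longleftrightarrow> X \<in> carrier_mat (dim_col A) (dim_row A) \<and>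
     A * X * A = A \<and> X * A * X = X \<and>
     transpose_mat (A * X) = A * X \<and> transpose_mat (X * A) = X * A"

definition pinv :: "real mat \<Rightarrow> real mat" where
  "pinv A = (THE X. is_pinv A X)"

definition orth_proj :: "real vec set \<Rightarrow> real vec \<Rightarrow> real vec" where
  "orth_proj S x = (THE y. y \<in> S \<and> (\<forall>z\<in>S. (x - y) \<bullet> z = 0))"

definition sin_angle :: "real vec set \<Rightarrow> real vec \<Rightarrow> real" where
  "sin_angle S x = vnorm (x - orth_proj S x)"

definition first_cols :: "nat \<Rightarrow> real mat \<Rightarrow> real mat" where
  "first_cols k A = mat (dim_row A) k (\<lambda>(i,j). A $$ (i,j))"

definition last_cols :: "nat \<Rightarrow> real mat \<Rightarrow> real mat" where
  "last_cols k A = mat (dim_row A) (dim_col A - k) (\<lambda>(i,j). A $$ (i, j + k))"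

definition rect_diag :: "nat \<Rightarrow> nat \<Rightarrow> (nat \<Rightarrow> real) \<Rightarrow> real mat" where
  "rect_diag m n s = mat m n (\<lambda>(i,j). if i = j then s i else 0)"

end

theory Submission
  imports Defs
begin

text \<open>
  Write \<open>U\<^sup>T \<Phi> = [\<Phi>\<^sub>1; \<Phi>\<^sub>2]\<close>. Since \<open>\<Phi>\<^sub>1\<close> has full row rank, the vector
  \<open>z = pinv \<Phi>\<^sub>1 e\<^sub>i\<close> satisfies \<open>U\<^sup>T \<Phi> z = [e\<^sub>i; \<Phi>\<^sub>2 (pinv \<Phi>\<^sub>1) e\<^sub>i]\<close>, and the lower
  block has norm at most \<open>t = \<parallel>\<Phi>\<^sub>2 pinv \<Phi>\<^sub>1\<parallel>\<^sub>2\<close>. By the SVD,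
  \<open>(A\<^sup>T A)\<^sup>q A\<^sup>T = V \<Sigma>^(2q+1) U\<^sup>T\<close>, so \<open>(A\<^sup>T A)\<^sup>q A\<^sup>T \<Phi> z\<close> lies in
  \<open>range Pbar \<subseteq> range P\<close>, and its coordinates with respect to \<open>V\<close> are \<open>\<sigma>\<^sub>i^(2q+1)\<close>
  at \<open>i\<close>, zero at the other leading positions, and of total norm at most
  \<open>\<sigma>\<^sub>k\<^sub>+\<^sub>1^(2q+1) t\<close> at the trailing ones. Multiplying by \<open>A\<close> gives the same picture in
  \<open>range (A Pbar) \<subseteq> range Q\<close> with respect to \<open>U\<close> and with exponent \<open>2q+2\<close>.

  If a subspace contains a vector whose coordinate along a member \<open>u\<close> of an orthonormal basis
  is \<open>s > 0\<close> and whose other coordinates have squared norm \<open>H\<close>, the best multiple of that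
  vector shows \<open>sin \<angle>(subspace, u) \<le> sqrt (H / (s\<^sup>2 + H))\<close>. With \<open>s = \<sigma>\<^sub>i\<^sup>a\<close>,
  \<open>H \<le> (\<sigma>\<^sub>k\<^sub>+\<^sub>1\<^sup>a t)\<^sup>2\<close> and \<open>\<gamma> \<le> \<delta>\<^sub>i\<close> this is the claimed bound.
\<close>

section \<open>Euclidean norm and spectral norm\<close>

lemma scalar_prod_self_nonneg: "0 \<le> (x :: real vec) \<bullet> x"
  unfolding scalar_prod_def by (intro sum_nonneg) auto

lemma scalar_prod_self_eq_0:
  assumes "(x :: real vec) \<in> carrier_vec r" "x \<bullet> x = 0"
  shows "x = 0\<^sub>v r"
proof (rule eq_vecI)
  have "\<forall>i\<in>{0..<dim_vec x}. x $ i * x $ i = 0"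
    using assms(2) unfolding scalar_prod_def by (subst sum_nonneg_eq_0_iff[symmetric]) auto
  then show "\<And>i. i < dim_vec (0\<^sub>v r) \<Longrightarrow> x $ i = 0\<^sub>v r $ i" using assms(1) by auto
qed (use assms in auto)

lemma vnorm_nonneg: "0 \<le> vnorm x"
  unfolding vnorm_def using scalar_prod_self_nonneg by simp

lemma vnorm_power2: "vnorm x ^ 2 = x \<bullet> x"
  unfolding vnorm_def using scalar_prod_self_nonneg[of x] by simp

lemma vnorm_unit_vec: "i < n \<Longrightarrow> vnorm (unit_vec n i) = 1"
  unfolding vnorm_def by simp

lemma vnorm_le_sum_abs: "vnorm v \<le> (\<Sum>i\<in>{0..<dim_vec v}. \<bar>v $ i\<bar>)"
proof -
  define S where "S = (\<Sum>i\<in>{0..<dim_vec v}. \<bar>v $ i\<bar>)"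
  have "v \<bullet> v = (\<Sum>i\<in>{0..<dim_vec v}. \<bar>v $ i\<bar> * \<bar>v $ i\<bar>)"
    unfolding scalar_prod_def by (intro sum.cong) (auto simp: abs_mult_self_eq)
  also have "\<dots> \<le> (\<Sum>i\<in>{0..<dim_vec v}. \<bar>v $ i\<bar> * S)"
    unfolding S_def by (intro sum_mono mult_left_mono member_le_sum) auto
  also have "\<dots> = S\<^sup>2" unfolding S_def by (simp add: sum_distrib_right power2_eq_square)
  finally have "sqrt (v \<bullet> v) \<le> sqrt (S\<^sup>2)" by (rule real_sqrt_le_mono)
  moreover have "0 \<le> S" unfolding S_def by (intro sum_nonneg) auto
  ultimately show ?thesis unfolding vnorm_def S_def by simp
qed

lemma abs_index_le_1_if_vnorm_1:
  assumes "vnorm x = 1" "j < dim_vec x"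
  shows "\<bar>x $ j\<bar> \<le> 1"
proof -
  have "x $ j * x $ j \<le> (\<Sum>i\<in>{0..<dim_vec x}. x $ i * x $ i)"
    using assms(2) by (intro member_le_sum) auto
  also have "\<dots> = 1" using assms(1) vnorm_power2[of x] by (simp add: scalar_prod_def)
  finally show ?thesis using abs_square_le_1[of "x $ j"] by (simp add: power2_eq_square)
qed

lemma vnorm_mult_le_spec_norm:
  assumes F: "F \<in> carrier_mat a b" and x: "x \<in> carrier_vec b" "vnorm x = 1"
  shows "vnorm (F *\<^sub>v x) \<le> spec_norm F"
  unfolding spec_norm_def
proof (rule cSup_upper)
  show "vnorm (F *\<^sub>v x) \<in> {vnorm (F *\<^sub>v x) |x. x \<in> carrier_vec (dim_col F) \<and> vnorm x = 1}"
    using x F by auto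
  have bound: "vnorm (F *\<^sub>v y) \<le> (\<Sum>i\<in>{0..<a}. \<Sum>j\<in>{0..<b}. \<bar>F $$ (i,j)\<bar>)"
    if y: "y \<in> carrier_vec b" "vnorm y = 1" for y
  proof -
    have "vnorm (F *\<^sub>v y) \<le> (\<Sum>i\<in>{0..<a}. \<bar>\<Sum>j\<in>{0..<b}. F $$ (i,j) * y $ j\<bar>)"
      using vnorm_le_sum_abs[of "F *\<^sub>v y"] F y by (simp add: scalar_prod_def)
    also have "\<dots> \<le> (\<Sum>i\<in>{0..<a}. \<Sum>j\<in>{0..<b}. \<bar>F $$ (i,j)\<bar> * \<bar>y $ j\<bar>)"
      by (intro sum_mono order.trans[OF sum_abs]) (simp add: abs_mult)
    also have "\<dots> \<le> (\<Sum>i\<in>{0..<a}. \<Sum>j\<in>{0..<b}. \<bar>F $$ (i,j)\<bar>)"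
      using abs_index_le_1_if_vnorm_1[OF y(2)] y(1)
      by (intro sum_mono) (simp add: mult_left_le)
    finally show ?thesis .
  qed
  show "bdd_above {vnorm (F *\<^sub>v x) |x. x \<in> carrier_vec (dim_col F) \<and> vnorm x = 1}"
    unfolding bdd_above_def using bound F by auto
qed

section \<open>Column spaces and orthogonal projections\<close>

lemma mult_mat_vec_in_col_space:
  "W \<in> carrier_mat r c \<Longrightarrow> a \<in> carrier_vec c \<Longrightarrow> W *\<^sub>v a \<in> col_space W"
  unfolding col_space_def by auto

lemma col_space_mult_subset:
  assumes "A \<in> carrier_mat r c" "B \<in> carrier_mat c e"
  shows "col_space (A * B) \<subseteq> col_space A"
proof
  fix y assume "y \<in> col_space (A * B)"
  then obtain x where "x \<in> carrier_vec e" "y = (A * B) *\<^sub>v x"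
    using assms unfolding col_space_def by auto
  then show "y \<in> col_space A"
    using assms by (auto simp: assoc_mult_mat_vec intro: mult_mat_vec_in_col_space)
qed

lemma col_space_mult_mono:
  assumes A: "A \<in> carrier_mat r c" and B: "B \<in> carrier_mat c e" and C: "C \<in> carrier_mat c e'"
    and BC: "col_space B \<subseteq> col_space C"
  shows "col_space (A * B) \<subseteq> col_space (A * C)"
proof
  fix y assume "y \<in> col_space (A * B)"
  then obtain x where x: "x \<in> carrier_vec e" "y = (A * B) *\<^sub>v x"
    using A B unfolding col_space_def by auto
  then have "B *\<^sub>v x \<in> col_space C"
    using BC B by (auto intro: mult_mat_vec_in_col_space)
  then obtain x' where x': "x' \<in> carrier_vec e'" "B *\<^sub>v x = C *\<^sub>v x'"
    using C unfolding col_space_def by auto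
  have "y = (A * C) *\<^sub>v x'" using x x' A B C by (simp add: assoc_mult_mat_vec)
  moreover have "(A * C) *\<^sub>v x' \<in> col_space (A * C)"
    using x' A C by (intro mult_mat_vec_in_col_space) auto
  ultimately show "y \<in> col_space (A * C)" by simp
qed

lemma orthonormal_colsD:
  "W \<in> carrier_mat r c \<Longrightarrow> orthonormal_cols W \<Longrightarrow> transpose_mat W * W = 1\<^sub>m c"
  unfolding orthonormal_cols_def by simp

lemma orthonormal_cols_square_right_inverse:
  assumes "W \<in> carrier_mat r r" "orthonormal_cols W"
  shows "W * transpose_mat W = 1\<^sub>m r"
  by (rule mat_mult_left_right_inverse[OF _ assms(1) orthonormal_colsD[OF assms]])
    (use assms(1) in simp)

lemma orthonormal_cols_mult:
  assumes W: "W \<in> carrier_mat r c" "orthonormal_cols W" and Om: "Om \<in> carrier_mat c e" "orthonormal_cols Om"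
  shows "orthonormal_cols (W * Om)"
proof -
  have "transpose_mat (W * Om) * (W * Om) = transpose_mat Om * (transpose_mat W * W) * Om"
    using W Om by (simp add: transpose_mult[of _ r c] assoc_mult_mat[of _ e c _ r _ e]
        assoc_mult_mat[of _ e r _ c _ e] assoc_mult_mat[of _ e c _ c _ e])
  then show ?thesis unfolding orthonormal_cols_def
    using orthonormal_colsD[OF W] orthonormal_colsD[OF Om] W Om by simp
qed

lemma col_space_mult_subset_of_qr:
  assumes A: "A \<in> carrier_mat m n" and B: "B \<in> carrier_mat n e" and Pb: "Pbar \<in> carrier_mat n d"
    and Q: "Q \<in> carrier_mat m d" and R: "R \<in> carrier_mat d d'"
    and range: "col_space B = col_space Pbar" and QR: "A * Pbar = Q * R"
  shows "col_space (A * B) \<subseteq> col_space Q"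
proof -
  have "col_space (A * B) \<subseteq> col_space (A * Pbar)"
    using A B Pb range by (intro col_space_mult_mono) auto
  also have "\<dots> \<subseteq> col_space Q" unfolding QR by (rule col_space_mult_subset[OF Q R])
  finally show ?thesis .
qed

lemma col_space_subset_mult_orthonormal:
  assumes W: "W \<in> carrier_mat n d" and Om: "Om \<in> carrier_mat d d" "orthonormal_cols Om"
  shows "col_space W \<subseteq> col_space (W * Om)"
proof -
  have "W = W * Om * transpose_mat Om"
    using assoc_mult_mat[OF W Om(1) transpose_carrier_mat[THEN iffD2, OF Om(1)]]
      orthonormal_cols_square_right_inverse[OF Om] W by simp
  then show ?thesis
    using col_space_mult_subset[OF mult_carrier_mat[OF W Om(1)], of "transpose_mat Om" d] Om(1) by auto
qed

lemma col_space_residual_orthogonal: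
  assumes W: "W \<in> carrier_mat r c" "orthonormal_cols W" and x: "x \<in> carrier_vec r"
    and z: "z \<in> col_space W"
  shows "(x - W *\<^sub>v (transpose_mat W *\<^sub>v x)) \<bullet> z = 0"
proof -
  let ?p = "W *\<^sub>v (transpose_mat W *\<^sub>v x)"
  obtain a where a: "a \<in> carrier_vec c" "z = W *\<^sub>v a" using z W unfolding col_space_def by auto
  have "transpose_mat W *\<^sub>v ?p = (transpose_mat W * W) *\<^sub>v (transpose_mat W *\<^sub>v x)"
    using W x by (subst assoc_mult_mat_vec) auto
  also have "\<dots> = transpose_mat W *\<^sub>v x" using orthonormal_colsD[OF W] W x by simp
  finally have "transpose_mat W *\<^sub>v (x - ?p) = 0\<^sub>v c"
    using W x by (subst mult_minus_distrib_mat_vec) auto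
  moreover have "(x - ?p) \<bullet> (W *\<^sub>v a) = (transpose_mat W *\<^sub>v (x - ?p)) \<bullet> a"
    using transpose_vec_mult_scalar[OF W(1) a(1), of "x - ?p"] W x by auto
  ultimately show ?thesis using a by simp
qed

lemma orth_proj_col_space:
  assumes W: "W \<in> carrier_mat r c" "orthonormal_cols W" and x: "x \<in> carrier_vec r"
  shows "orth_proj (col_space W) x = W *\<^sub>v (transpose_mat W *\<^sub>v x)"
  unfolding orth_proj_def
proof (rule the_equality)
  let ?p = "W *\<^sub>v (transpose_mat W *\<^sub>v x)"
  show "?p \<in> col_space W \<and> (\<forall>z\<in>col_space W. (x - ?p) \<bullet> z = 0)"
    using col_space_residual_orthogonal[OF W x] mult_mat_vec_in_col_space W x by auto
  fix y assume y: "y \<in> col_space W \<and> (\<forall>z\<in>col_space W. (x - y) \<bullet> z = 0)"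
  then obtain a where a: "a \<in> carrier_vec c" "y = W *\<^sub>v a" using W unfolding col_space_def by auto
  have yc: "y \<in> carrier_vec r" and pc: "?p \<in> carrier_vec r" using a W x by auto
  have "y - ?p = W *\<^sub>v (a - transpose_mat W *\<^sub>v x)"
    using a W x by (subst mult_minus_distrib_mat_vec) auto
  then have d: "y - ?p \<in> col_space W" using W a x by (auto intro: mult_mat_vec_in_col_space)
  \<comment> \<open>\<open>y - p\<close> lies in the subspace and is a difference of two vectors orthogonal to it\<close>
  have "y - ?p = (x - ?p) - (x - y)" using W x yc pc by (intro eq_vecI) auto
  then have "(y - ?p) \<bullet> (y - ?p) = (x - ?p) \<bullet> (y - ?p) - (x - y) \<bullet> (y - ?p)"
    using x yc pc by (metis minus_carrier_vec minus_scalar_prod_distrib)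
  also have "\<dots> = 0" using col_space_residual_orthogonal[OF W x d] y d by simp
  finally have "y - ?p = 0\<^sub>v r" using scalar_prod_self_eq_0 yc pc by auto
  then have "y $ j - ?p $ j = 0" if "j < r" for j
    using index_minus_vec(1)[of j ?p y] that W by simp
  then show "y = ?p" using yc pc W by (intro eq_vecI) auto
qed

section \<open>Angles with the columns of an orthogonal matrix\<close>

lemma vnorm_transpose_orthonormal_mult:
  assumes Om: "Om \<in> carrier_mat r r" "orthonormal_cols Om" and v: "v \<in> carrier_vec r"
  shows "vnorm (transpose_mat Om *\<^sub>v v) = vnorm v"
proof -
  have "(transpose_mat Om *\<^sub>v v) \<bullet> (transpose_mat Om *\<^sub>v v) = v \<bullet> (Om *\<^sub>v (transpose_mat Om *\<^sub>v v))"
    using transpose_vec_mult_scalar[OF Om(1), of "transpose_mat Om *\<^sub>v v" v] Om v by auto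
  also have "Om *\<^sub>v (transpose_mat Om *\<^sub>v v) = (Om * transpose_mat Om) *\<^sub>v v"
    using Om v by (subst assoc_mult_mat_vec) auto
  also have "\<dots> = v" using orthonormal_cols_square_right_inverse[OF Om] v by simp
  finally show ?thesis unfolding vnorm_def by simp
qed

lemma sin_angle_le_dist:
  assumes W: "W \<in> carrier_mat r c" "orthonormal_cols W" and x: "x \<in> carrier_vec r"
    and y: "y \<in> col_space W"
  shows "sin_angle (col_space W) x \<le> vnorm (x - y)"
proof -
  let ?p = "W *\<^sub>v (transpose_mat W *\<^sub>v x)"
  obtain a where a: "a \<in> carrier_vec c" "y = W *\<^sub>v a" using y W unfolding col_space_def by auto
  have pc: "?p \<in> carrier_vec r" and yc: "y \<in> carrier_vec r" using a W x by auto
  define u where "u = x - ?p"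
  define v where "v = ?p - y"
  have u: "u \<in> carrier_vec r" and v: "v \<in> carrier_vec r" using x pc yc unfolding u_def v_def by auto
  have "?p - y = W *\<^sub>v (transpose_mat W *\<^sub>v x - a)"
    using a W x by (subst mult_minus_distrib_mat_vec) auto
  then have "v \<in> col_space W" unfolding v_def using W a x by (auto intro: mult_mat_vec_in_col_space)
  then have uv: "u \<bullet> v = 0" unfolding u_def by (rule col_space_residual_orthogonal[OF W x])
  then have vu: "v \<bullet> u = 0" using comm_scalar_prod[OF v u] by simp
  have "x - y = u + v" unfolding u_def v_def using W x pc yc by (intro eq_vecI) auto
  then have "(x - y) \<bullet> (x - y) = u \<bullet> u + v \<bullet> v"
    using u v uv vu by (simp add: add_scalar_prod_distrib[of _ r] scalar_prod_add_distrib[of _ r])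
  then have "u \<bullet> u \<le> (x - y) \<bullet> (x - y)" using scalar_prod_self_nonneg[of v] by simp
  then show ?thesis unfolding sin_angle_def orth_proj_col_space[OF W x] u_def[symmetric] vnorm_def
    by simp
qed

lemma vnorm_unit_vec_minus_smult:
  assumes g: "g \<in> carrier_vec r" and i: "i < r" and s: "0 < g $ i"
  defines "H \<equiv> \<Sum>j\<in>{0..<r}-{i}. (g $ j)\<^sup>2"
  shows "vnorm (unit_vec r i - (g $ i / ((g $ i)\<^sup>2 + H)) \<cdot>\<^sub>v g) = sqrt (H / ((g $ i)\<^sup>2 + H))"
proof -
  define s where "s = g $ i"
  define D where "D = s\<^sup>2 + H"
  let ?w = "unit_vec r i - (s / D) \<cdot>\<^sub>v g"
  have "0 \<le> H" unfolding H_def by (intro sum_nonneg) auto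
  then have D: "0 < D" unfolding D_def s_def using s by (simp add: add_pos_nonneg)
  have "?w \<bullet> ?w = (\<Sum>j\<in>{0..<r}. (?w $ j)\<^sup>2)"
    unfolding scalar_prod_def using g by (simp add: power2_eq_square)
  also have "\<dots> = (?w $ i)\<^sup>2 + (\<Sum>j\<in>{0..<r}-{i}. (?w $ j)\<^sup>2)"
    using i by (subst sum.remove[of _ i]) auto
  also have "(\<Sum>j\<in>{0..<r}-{i}. (?w $ j)\<^sup>2) = (\<Sum>j\<in>{0..<r}-{i}. (s / D)\<^sup>2 * (g $ j)\<^sup>2)"
    using g by (intro sum.cong) (auto simp: power2_eq_square unit_vec_def)
  also have "\<dots> = (s / D)\<^sup>2 * H" unfolding H_def by (simp add: sum_distrib_left)
  also have "?w $ i = H / D" using g i D unfolding D_def s_def by (simp add: field_simps power2_eq_square)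
  also have "(H / D)\<^sup>2 + (s / D)\<^sup>2 * H = H * D / D\<^sup>2"
    unfolding D_def by (simp add: power_divide add_divide_distrib algebra_simps power2_eq_square)
  also have "\<dots> = H / D" using D by (simp add: power2_eq_square)
  finally show ?thesis unfolding vnorm_def D_def s_def by simp
qed

lemma sin_angle_col_le_sqrt_ratio:
  assumes Om: "Om \<in> carrier_mat r r" "orthonormal_cols Om"
    and W: "W \<in> carrier_mat r c" "orthonormal_cols W" and i: "i < r"
    and y: "y \<in> col_space W" and s: "0 < (transpose_mat Om *\<^sub>v y) $ i"
  defines "g \<equiv> transpose_mat Om *\<^sub>v y"
  defines "H \<equiv> \<Sum>j\<in>{0..<r}-{i}. (g $ j)\<^sup>2"
  shows "sin_angle (col_space W) (col Om i) \<le> sqrt (H / ((g $ i)\<^sup>2 + H))"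
proof -
  define a where "a = g $ i / ((g $ i)\<^sup>2 + H)"
  obtain b where b: "b \<in> carrier_vec c" "y = W *\<^sub>v b" using y W unfolding col_space_def by auto
  have ay: "a \<cdot>\<^sub>v y = W *\<^sub>v (a \<cdot>\<^sub>v b)" using b W by (simp add: mult_mat_vec)
  have yc: "y \<in> carrier_vec r" using b W by auto
  have "a \<cdot>\<^sub>v y \<in> col_space W" using ay W b by (auto intro: mult_mat_vec_in_col_space)
  \<comment> \<open>\<open>a \<cdot> y\<close> is the multiple of \<open>y\<close> closest to \<open>col Om i\<close>\<close>
  then have "sin_angle (col_space W) (col Om i) \<le> vnorm (col Om i - a \<cdot>\<^sub>v y)"
    using Om i by (intro sin_angle_le_dist[OF W]) auto
  also have "\<dots> = vnorm (transpose_mat Om *\<^sub>v (col Om i - a \<cdot>\<^sub>v y))"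
    using vnorm_transpose_orthonormal_mult[OF Om] Om i yc by simp
  also have "transpose_mat Om *\<^sub>v (col Om i - a \<cdot>\<^sub>v y) = unit_vec r i - a \<cdot>\<^sub>v g"
  proof -
    have "transpose_mat Om *\<^sub>v col Om i = col (transpose_mat Om * Om) i"
      using Om i by (subst col_mult2) auto
    also have "\<dots> = unit_vec r i" using orthonormal_colsD[OF Om] i by simp
    finally show ?thesis
      unfolding g_def using Om i yc by (simp add: mult_minus_distrib_mat_vec mult_mat_vec)
  qed
  also have "vnorm (unit_vec r i - a \<cdot>\<^sub>v g) = sqrt (H / ((g $ i)\<^sup>2 + H))"
    unfolding a_def H_def using s Om yc i g_def by (intro vnorm_unit_vec_minus_smult) auto
  finally show ?thesis .
qed

lemma sqrt_ratio_le:
  fixes s H T G :: real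
  assumes s: "0 < s" and H: "0 \<le> H" "H \<le> (s * T)\<^sup>2" and G: "0 \<le> G" "G \<le> T"
  shows "sqrt (H / (s\<^sup>2 + H)) \<le> T / sqrt (1 + G\<^sup>2)"
proof -
  have "H / (s\<^sup>2 + H) \<le> (s * T)\<^sup>2 / (s\<^sup>2 + (s * T)\<^sup>2)"
  proof -
    have "H * s\<^sup>2 \<le> (s * T)\<^sup>2 * s\<^sup>2" using H by (intro mult_right_mono) auto
    then have "H * (s\<^sup>2 + (s * T)\<^sup>2) \<le> (s * T)\<^sup>2 * (s\<^sup>2 + H)"
      by (simp add: algebra_simps)
    then show ?thesis using s H by (simp add: divide_simps add_pos_nonneg)
  qed
  also have "\<dots> = (T\<^sup>2 * s\<^sup>2) / ((1 + T\<^sup>2) * s\<^sup>2)" by (simp add: power_mult_distrib algebra_simps)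
  also have "\<dots> = T\<^sup>2 / (1 + T\<^sup>2)" using s by simp
  also have "\<dots> \<le> T\<^sup>2 / (1 + G\<^sup>2)" using G by (intro divide_left_mono add_left_mono power_mono) (auto simp: add_pos_nonneg)
  finally have "sqrt (H / (s\<^sup>2 + H)) \<le> sqrt (T\<^sup>2 / (1 + G\<^sup>2))" by simp
  also have "\<dots> = T / sqrt (1 + G\<^sup>2)" using G by (simp add: real_sqrt_divide)
  finally show ?thesis .
qed

lemma sum_power2_remove_le:
  fixes g f w :: "nat \<Rightarrow> real"
  assumes ik: "i < k" "k \<le> r" "r \<le> m"
    and g: "\<And>j. j < r \<Longrightarrow> g j = f j * w j"
    and lead: "\<And>j. j < k \<Longrightarrow> j \<noteq> i \<Longrightarrow> w j = 0"
    and f: "\<And>j. k \<le> j \<Longrightarrow> j < r \<Longrightarrow> \<bar>f j\<bar> \<le> c"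
  shows "(\<Sum>j\<in>{0..<r}-{i}. (g j)\<^sup>2) \<le> c\<^sup>2 * (\<Sum>j\<in>{k..<m}. (w j)\<^sup>2)"
proof -
  have split: "{0..<r}-{i} = ({0..<k}-{i}) \<union> {k..<r}" using ik by auto
  have "(\<Sum>j\<in>{0..<r}-{i}. (g j)\<^sup>2) = (\<Sum>j\<in>{0..<k}-{i}. (g j)\<^sup>2) + (\<Sum>j\<in>{k..<r}. (g j)\<^sup>2)"
    unfolding split by (rule sum.union_disjoint) auto
  also have "(\<Sum>j\<in>{0..<k}-{i}. (g j)\<^sup>2) = 0"
    using g lead ik by (intro sum.neutral ballI) auto
  also have "(\<Sum>j\<in>{k..<r}. (g j)\<^sup>2) \<le> (\<Sum>j\<in>{k..<r}. c\<^sup>2 * (w j)\<^sup>2)"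
  proof (intro sum_mono)
    fix j assume j: "j \<in> {k..<r}"
    have "\<bar>f j\<bar>\<^sup>2 \<le> c\<^sup>2" using f[of j] j by (intro power_mono) auto
    then show "(g j)\<^sup>2 \<le> c\<^sup>2 * (w j)\<^sup>2"
      using g[of j] j by (simp add: power_mult_distrib mult_right_mono)
  qed
  also have "\<dots> \<le> c\<^sup>2 * (\<Sum>j\<in>{k..<m}. (w j)\<^sup>2)"
    unfolding sum_distrib_left[symmetric] using ik by (intro mult_left_mono sum_mono2) auto
  finally show ?thesis by simp
qed

lemma sin_angle_col_le_of_coordinates:
  assumes Om: "Om \<in> carrier_mat r r" "orthonormal_cols Om"
    and W: "W \<in> carrier_mat r c" "orthonormal_cols W" and i: "i < r" and y: "y \<in> col_space W"
    and s: "(transpose_mat Om *\<^sub>v y) $ i = s" "0 < s"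
    and H: "(\<Sum>j\<in>{0..<r}-{i}. ((transpose_mat Om *\<^sub>v y) $ j)\<^sup>2) \<le> (s * T)\<^sup>2"
    and G: "0 \<le> G" "G \<le> T"
  shows "sin_angle (col_space W) (col Om i) \<le> T / sqrt (1 + G\<^sup>2)"
proof -
  have "sin_angle (col_space W) (col Om i)
      \<le> sqrt ((\<Sum>j\<in>{0..<r}-{i}. ((transpose_mat Om *\<^sub>v y) $ j)\<^sup>2)
        / (s\<^sup>2 + (\<Sum>j\<in>{0..<r}-{i}. ((transpose_mat Om *\<^sub>v y) $ j)\<^sup>2)))"
    using sin_angle_col_le_sqrt_ratio[OF Om W i y] s by simp
  also have "\<dots> \<le> T / sqrt (1 + G\<^sup>2)" by (intro sqrt_ratio_le s H G sum_nonneg) auto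
  finally show ?thesis .
qed

section \<open>Pseudo-inverse of a matrix of full row rank\<close>

lemma mult_mat_vec_surj_of_full_row_rank:
  assumes F: "F \<in> carrier_mat k d" and rk: "vec_space.rank k F = k" and y: "(y :: real vec) \<in> carrier_vec k"
  shows "\<exists>x \<in> carrier_vec d. F *\<^sub>v x = y"
proof -
  interpret V: vec_space "TYPE(real)" k .
  obtain S where fS: "finite S" and max: "maximal S (\<lambda>T. T \<subseteq> set (cols F) \<and> V.lin_indpt T)"
    using maximal_exists[of "(\<lambda>T. T \<subseteq> set (cols F) \<and> V.lin_indpt T)" "card (set (cols F))" "{}"]
    by (meson List.finite_set card_mono empty_iff empty_subsetI V.finite_lin_indpt2 rev_finite_subset)
  have "card S = k" using V.rank_card_indpt[OF F max] rk by simp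
  moreover have Ssub: "S \<subseteq> set (cols F)" and "V.lin_indpt S" using max unfolding maximal_def by auto
  moreover have colsc: "set (cols F) \<subseteq> carrier_vec k" using F cols_dim by blast
  ultimately have "V.basis S" using fS V.dim_is_n by (intro V.dim_li_is_basis) auto
  then have "V.span S = carrier_vec k" unfolding V.basis_def by auto
  moreover have "V.span S \<subseteq> V.span (set (cols F))" using Ssub colsc by (intro V.span_is_monotone) auto
  ultimately have "y \<in> V.col_space F" using y unfolding V.col_space_def by auto
  then show ?thesis unfolding V.col_space_eq[OF F] using F by auto
qed

lemma gram_mat_invertible_of_surj:
  assumes F: "F \<in> carrier_mat k d"
    and surj: "\<And>y. (y :: real vec) \<in> carrier_vec k \<Longrightarrow> \<exists>x \<in> carrier_vec d. F *\<^sub>v x = y"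
  obtains B where "B \<in> carrier_mat k k" "B * (F * transpose_mat F) = 1\<^sub>m k"
    "(F * transpose_mat F) * B = 1\<^sub>m k"
proof -
  define G where "G = F * transpose_mat F"
  have Gc: "G \<in> carrier_mat k k" unfolding G_def using F by auto
  have "y = 0\<^sub>v k" if y: "y \<in> carrier_vec k" and Gy: "G *\<^sub>v y = 0\<^sub>v k" for y
  proof -
    have Fty: "transpose_mat F *\<^sub>v y \<in> carrier_vec d" using F y by auto
    have "(transpose_mat F *\<^sub>v y) \<bullet> (transpose_mat F *\<^sub>v y) = y \<bullet> (G *\<^sub>v y)"
      using transpose_vec_mult_scalar[OF F Fty y] F y unfolding G_def by (simp add: assoc_mult_mat_vec)
    then have Fty0: "transpose_mat F *\<^sub>v y = 0\<^sub>v d" using Gy y Fty by (simp add: scalar_prod_self_eq_0)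
    obtain x where x: "x \<in> carrier_vec d" "F *\<^sub>v x = y" using surj y by blast
    have "y \<bullet> y = (transpose_mat F *\<^sub>v y) \<bullet> x"
      using transpose_vec_mult_scalar[OF F x(1) y] x by simp
    then show ?thesis using Fty0 x y by (simp add: scalar_prod_self_eq_0)
  qed
  then have "det G \<noteq> 0" using det_0_iff_vec_prod_zero_field[OF Gc] by auto
  from det_non_zero_imp_unit[OF Gc this, of "()"] show ?thesis
    using that unfolding Units_def ring_mat_def G_def by auto
qed

lemma pinv_eq_transpose_mult_gram_inverse:
  assumes F: "F \<in> carrier_mat k d" and B: "B \<in> carrier_mat k k"
    and BG: "B * (F * transpose_mat F) = 1\<^sub>m k" and GB: "(F * transpose_mat F) * B = 1\<^sub>m k"
  shows "pinv F = transpose_mat F * B"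
proof -
  define G where "G = F * transpose_mat F"
  define X where "X = transpose_mat F * B"
  have Ft: "transpose_mat F \<in> carrier_mat d k" and Gc: "G \<in> carrier_mat k k"
    and Xc: "X \<in> carrier_mat d k" using F B unfolding G_def X_def by auto
  have "transpose_mat G = G" unfolding G_def using F by (subst transpose_mult[of _ k d]) auto
  then have "G * transpose_mat B = 1\<^sub>m k"
    using arg_cong[OF BG, of transpose_mat] B Gc unfolding G_def[symmetric]
    by (subst (asm) transpose_mult[of _ k k]) auto
  then have Bt: "transpose_mat B = B"
    using assoc_mult_mat[OF B Gc, of "transpose_mat B" k] BG B unfolding G_def[symmetric] by simp
  have FX: "F * X = 1\<^sub>m k" unfolding X_def using assoc_mult_mat[OF F Ft B] GB by simp
  have pX: "is_pinv F X"
    unfolding is_pinv_def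
  proof (intro conjI)
    show "X \<in> carrier_mat (dim_col F) (dim_row F)" using Xc F by auto
    show "F * X * F = F" using FX F by simp
    show "X * F * X = X" using FX F Xc by (subst assoc_mult_mat[of _ d k]) auto
    show "transpose_mat (F * X) = F * X" using FX by simp
    have "transpose_mat (X * F) = transpose_mat F * transpose_mat X" using Xc F by (rule transpose_mult)
    also have "transpose_mat X = transpose_mat B * F"
      unfolding X_def using F B by (subst transpose_mult[of _ d k]) auto
    finally show "transpose_mat (X * F) = X * F" unfolding Bt X_def using assoc_mult_mat[OF Ft B F] by simp
  qed
  \<comment> \<open>any generalised inverse \<open>Y\<close> is a right inverse, so \<open>Y = F\<^sup>T (Y\<^sup>T Y)\<close> with \<open>Y\<^sup>T Y = G\<inverse>\<close>\<close>
  have "Y = X" if "is_pinv F Y" for Y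
  proof -
    have Yc: "Y \<in> carrier_mat d k" and FYF: "F * Y * F = F" and YFY: "Y * F * Y = Y"
      and YF: "transpose_mat (Y * F) = Y * F" using that F unfolding is_pinv_def by auto
    have Ytc: "transpose_mat Y * Y \<in> carrier_mat k k" using Yc by auto
    have "F * Y = F * Y * (F * X)" using FX F Yc by simp
    also have "\<dots> = F * Y * F * X" by (rule assoc_mult_mat[OF mult_carrier_mat[OF F Yc] F Xc, symmetric])
    finally have FY: "F * Y = 1\<^sub>m k" using FYF FX by simp
    have "Y = transpose_mat (Y * F) * Y" using YFY YF by simp
    also have "\<dots> = transpose_mat F * (transpose_mat Y * Y)"
      using transpose_mult[OF Yc F] assoc_mult_mat[OF Ft _ Yc, of "transpose_mat Y"] Yc by simp
    finally have Y: "Y = transpose_mat F * (transpose_mat Y * Y)" .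
    have "transpose_mat Y * Y = B * G * (transpose_mat Y * Y)"
      using BG left_mult_one_mat[OF Ytc] unfolding G_def by simp
    also have "\<dots> = B * (F * Y)"
      using Y assoc_mult_mat[OF B Gc Ytc] assoc_mult_mat[OF F Ft Ytc] unfolding G_def by simp
    finally show "Y = X" using Y FY B unfolding X_def by simp
  qed
  then show ?thesis unfolding pinv_def X_def[symmetric] using pX by (intro the_equality)
qed

lemma pinv_right_inverse_of_full_row_rank:
  assumes F: "F \<in> carrier_mat k d" and rk: "vec_space.rank k F = k"
  shows "pinv F \<in> carrier_mat d k" "F * pinv F = 1\<^sub>m k"
proof -
  obtain B where B: "B \<in> carrier_mat k k" "B * (F * transpose_mat F) = 1\<^sub>m k"
    "(F * transpose_mat F) * B = 1\<^sub>m k"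
    using gram_mat_invertible_of_surj[OF F mult_mat_vec_surj_of_full_row_rank[OF F rk]] by blast
  have "pinv F = transpose_mat F * B" by (rule pinv_eq_transpose_mult_gram_inverse[OF F B])
  then show "pinv F \<in> carrier_mat d k" "F * pinv F = 1\<^sub>m k"
    using assoc_mult_mat[OF F _ B(1), of "transpose_mat F"] B F by auto
qed

section \<open>Rectangular diagonal matrices and powers of the SVD\<close>

lemma rect_diag_carrier [simp]: "rect_diag a b f \<in> carrier_mat a b"
  unfolding rect_diag_def by auto

lemma rect_diag_dims [simp]: "dim_row (rect_diag a b f) = a" "dim_col (rect_diag a b f) = b"
  unfolding rect_diag_def by auto

lemma rect_diag_index [simp]:
  "i < a \<Longrightarrow> j < b \<Longrightarrow> rect_diag a b f $$ (i, j) = (if i = j then f i else 0)"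
  unfolding rect_diag_def by auto

lemma rect_diag_mult:
  "rect_diag a b f * rect_diag b c g = rect_diag a c (\<lambda>j. if j < b then f j * g j else 0)"
proof (rule eq_matI)
  fix i j assume "i < dim_row (rect_diag a c (\<lambda>j. if j < b then f j * g j else 0))"
    and "j < dim_col (rect_diag a c (\<lambda>j. if j < b then f j * g j else 0))"
  then have ij: "i < a" "j < c" by auto
  have "(rect_diag a b f * rect_diag b c g) $$ (i, j)
      = (\<Sum>l\<in>{0..<b}. rect_diag a b f $$ (i, l) * rect_diag b c g $$ (l, j))"
    using ij by (simp add: scalar_prod_def)
  also have "\<dots> = (\<Sum>l\<in>{0..<b}. if l = i then (if i = j then f i * g i else 0) else 0)"
    using ij by (intro sum.cong) auto
  finally show "(rect_diag a b f * rect_diag b c g) $$ (i, j)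
      = rect_diag a c (\<lambda>j. if j < b then f j * g j else 0) $$ (i, j)"
    using ij by (simp add: sum.delta')
qed auto

lemma rect_diag_transpose: "transpose_mat (rect_diag a b f) = rect_diag b a f"
  by (rule eq_matI) auto

lemma rect_diag_cong:
  "(\<And>j. j < a \<Longrightarrow> j < b \<Longrightarrow> f j = g j) \<Longrightarrow> rect_diag a b f = rect_diag a b g"
  by (rule eq_matI) auto

lemma rect_diag_pow: "rect_diag n n f ^\<^sub>m q = rect_diag n n (\<lambda>j. f j ^ q)"
proof (induction q)
  case 0
  show ?case by (rule eq_matI) auto
next
  case (Suc q)
  have "rect_diag n n f ^\<^sub>m Suc q = rect_diag n n (\<lambda>j. f j ^ q) * rect_diag n n f"
    using Suc by simp
  also have "\<dots> = rect_diag n n (\<lambda>j. f j ^ Suc q)"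
    unfolding rect_diag_mult by (rule rect_diag_cong) auto
  finally show ?case .
qed

lemma rect_diag_mult_vec_index:
  assumes "w \<in> carrier_vec b" "j < a" "j < b"
  shows "(rect_diag a b f *\<^sub>v w) $ j = f j * w $ j"
proof -
  have "(rect_diag a b f *\<^sub>v w) $ j = (\<Sum>l\<in>{0..<b}. rect_diag a b f $$ (j, l) * w $ l)"
    using assms by (simp add: scalar_prod_def)
  also have "\<dots> = (\<Sum>l\<in>{0..<b}. if l = j then f j * w $ j else 0)"
    using assms by (intro sum.cong) auto
  finally show ?thesis using assms by simp
qed

lemma orthonormal_sandwich:
  assumes Om: "Om \<in> carrier_mat e b" "orthonormal_cols Om"
    and P: "P \<in> carrier_mat a a'" and D1: "D1 \<in> carrier_mat a' b"
    and D2: "D2 \<in> carrier_mat b c" and R: "R \<in> carrier_mat c c'"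
  shows "(P * D1 * transpose_mat Om) * (Om * D2 * R) = P * (D1 * D2) * R"
proof -
  have Ot: "transpose_mat Om \<in> carrier_mat b e" using Om by simp
  have PD1: "P * D1 \<in> carrier_mat a b" and OD2: "Om * D2 \<in> carrier_mat e c"
    using P D1 Om D2 by auto
  have "(P * D1 * transpose_mat Om) * (Om * D2 * R) = (P * D1) * (transpose_mat Om * (Om * D2 * R))"
    by (rule assoc_mult_mat[OF PD1 Ot mult_carrier_mat[OF OD2 R]])
  also have "transpose_mat Om * (Om * D2 * R) = (transpose_mat Om * (Om * D2)) * R"
    by (rule assoc_mult_mat[OF Ot OD2 R, symmetric])
  also have "transpose_mat Om * (Om * D2) = D2"
    using assoc_mult_mat[OF Ot Om(1) D2] orthonormal_colsD[OF Om] D2 by simp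
  also have "(P * D1) * (D2 * R) = P * (D1 * D2) * R"
    using assoc_mult_mat[OF PD1 D2 R] assoc_mult_mat[OF P D1 D2] by simp
  finally show ?thesis .
qed

lemma pow_mat_orthonormal_conj:
  assumes V: "V \<in> carrier_mat n n" "orthonormal_cols V" and E: "E \<in> carrier_mat n n"
  shows "(V * E * transpose_mat V) ^\<^sub>m q = V * (E ^\<^sub>m q) * transpose_mat V"
proof (induction q)
  case 0
  show ?case using orthonormal_cols_square_right_inverse[OF V] V E by simp
next
  case (Suc q)
  have "(V * E * transpose_mat V) ^\<^sub>m Suc q = (V * (E ^\<^sub>m q) * transpose_mat V) * (V * E * transpose_mat V)"
    using Suc by simp
  also have "\<dots> = V * (E ^\<^sub>m q * E) * transpose_mat V"
    using V E by (intro orthonormal_sandwich) auto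
  finally show ?case by simp
qed

lemma svd_power_factors:
  fixes \<sigma> :: "nat \<Rightarrow> real"
  assumes U: "U \<in> carrier_mat m m" "orthonormal_cols U" and V: "V \<in> carrier_mat n n" "orthonormal_cols V"
    and A: "A = U * rect_diag m n \<sigma> * transpose_mat V"
  shows "(transpose_mat A * A) ^\<^sub>m q * transpose_mat A
      = V * rect_diag n m (\<lambda>j. if j < n then \<sigma> j ^ (2 * q + 1) else 0) * transpose_mat U"
    and "A * ((transpose_mat A * A) ^\<^sub>m q * transpose_mat A)
      = U * rect_diag m m (\<lambda>j. if j < n then \<sigma> j ^ (2 * q + 2) else 0) * transpose_mat U"
proof -
  define E where "E = rect_diag n n (\<lambda>j. if j < m then \<sigma> j * \<sigma> j else 0)"
  have Ut: "transpose_mat U \<in> carrier_mat m m" and Vt: "transpose_mat V \<in> carrier_mat n n"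
    using U V by auto
  have "transpose_mat A = transpose_mat (transpose_mat V) * transpose_mat (U * rect_diag m n \<sigma>)"
    unfolding A using U Vt by (subst transpose_mult[of _ m n]) auto
  also have "transpose_mat (U * rect_diag m n \<sigma>) = rect_diag n m \<sigma> * transpose_mat U"
    using transpose_mult[OF U(1) rect_diag_carrier] by (simp add: rect_diag_transpose)
  finally have At: "transpose_mat A = V * rect_diag n m \<sigma> * transpose_mat U"
    using V Ut by (simp add: assoc_mult_mat[of _ n n _ m _ m])
  have "transpose_mat A * A = (V * rect_diag n m \<sigma> * transpose_mat U) * (U * rect_diag m n \<sigma> * transpose_mat V)"
    using At A by simp
  also have "\<dots> = V * E * transpose_mat V"
    unfolding E_def using V U by (subst orthonormal_sandwich[OF U]) (auto simp: rect_diag_mult)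
  finally have "transpose_mat A * A = V * E * transpose_mat V" .
  then have "(transpose_mat A * A) ^\<^sub>m q * transpose_mat A
      = (V * E ^\<^sub>m q * transpose_mat V) * (V * rect_diag n m \<sigma> * transpose_mat U)"
    unfolding At using V E_def by (simp add: pow_mat_orthonormal_conj)
  also have "\<dots> = V * (E ^\<^sub>m q * rect_diag n m \<sigma>) * transpose_mat U"
    using V Ut unfolding E_def by (intro orthonormal_sandwich) auto
  also have "E ^\<^sub>m q * rect_diag n m \<sigma> = rect_diag n m (\<lambda>j. if j < n then \<sigma> j ^ (2 * q + 1) else 0)"
    unfolding E_def rect_diag_pow rect_diag_mult
    by (intro rect_diag_cong) (simp add: power_mult power2_eq_square power_mult_distrib mult.commute)
  finally show M: "(transpose_mat A * A) ^\<^sub>m q * transpose_mat A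
      = V * rect_diag n m (\<lambda>j. if j < n then \<sigma> j ^ (2 * q + 1) else 0) * transpose_mat U" .
  have "A * (V * rect_diag n m (\<lambda>j. if j < n then \<sigma> j ^ (2 * q + 1) else 0) * transpose_mat U)
      = U * (rect_diag m n \<sigma> * rect_diag n m (\<lambda>j. if j < n then \<sigma> j ^ (2 * q + 1) else 0))
          * transpose_mat U"
    unfolding A using U V Ut by (intro orthonormal_sandwich) auto
  also have "rect_diag m n \<sigma> * rect_diag n m (\<lambda>j. if j < n then \<sigma> j ^ (2 * q + 1) else 0)
      = rect_diag m m (\<lambda>j. if j < n then \<sigma> j ^ (2 * q + 2) else 0)"
    unfolding rect_diag_mult by (intro rect_diag_cong) simp
  finally show "A * ((transpose_mat A * A) ^\<^sub>m q * transpose_mat A)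
      = U * rect_diag m m (\<lambda>j. if j < n then \<sigma> j ^ (2 * q + 2) else 0) * transpose_mat U"
    unfolding M .
qed

lemma nonincreasing_nonneg:
  fixes \<sigma> :: "nat \<Rightarrow> real"
  assumes mono: "\<And>i j. i \<le> j \<Longrightarrow> j < n \<Longrightarrow> \<sigma> j \<le> \<sigma> i" and last: "0 \<le> \<sigma> (n - 1)" and j: "j < n"
  shows "0 \<le> \<sigma> j"
proof -
  have "\<sigma> (n - 1) \<le> \<sigma> j" using j by (intro mono) auto
  then show ?thesis using last by simp
qed

lemma nonincreasing_power_le:
  fixes \<sigma> :: "nat \<Rightarrow> real"
  assumes mono: "\<And>i j. i \<le> j \<Longrightarrow> j < n \<Longrightarrow> \<sigma> j \<le> \<sigma> i" and last: "0 \<le> \<sigma> (n - 1)"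
    and "k \<le> j" "k < n"
  shows "\<bar>if j < n then \<sigma> j ^ a else 0\<bar> \<le> \<sigma> k ^ a"
  using assms nonincreasing_nonneg[of n \<sigma>, OF mono last] by (auto intro: power_mono)

lemma nonincreasing_ratio_le:
  fixes \<sigma> :: "nat \<Rightarrow> real"
  assumes mono: "\<And>i j. i \<le> j \<Longrightarrow> j < n \<Longrightarrow> \<sigma> j \<le> \<sigma> i" and last: "0 \<le> \<sigma> (n - 1)"
    and ik: "i \<le> k" "k < n" and si: "0 < \<sigma> i"
  shows "0 \<le> \<sigma> (n - 1) / \<sigma> 0" and "\<sigma> (n - 1) / \<sigma> 0 \<le> \<sigma> k / \<sigma> i"
proof -
  have s0: "\<sigma> i \<le> \<sigma> 0" using mono[of 0 i] ik by simp
  then show "0 \<le> \<sigma> (n - 1) / \<sigma> 0" using si last by simp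
  have "\<sigma> (n - 1) / \<sigma> 0 \<le> \<sigma> (n - 1) / \<sigma> i" using s0 si last by (intro divide_left_mono) auto
  also have "\<dots> \<le> \<sigma> k / \<sigma> i" using mono[of k "n - 1"] ik si by (intro divide_right_mono) auto
  finally show "\<sigma> (n - 1) / \<sigma> 0 \<le> \<sigma> k / \<sigma> i" .
qed

section \<open>The sketched vector\<close>

lemma transpose_first_cols_mult_vec_index:
  assumes U: "U \<in> carrier_mat m m" "k \<le> m" and v: "v \<in> carrier_vec m" and j: "j < k"
  shows "(transpose_mat (first_cols k U) *\<^sub>v v) $ j = (transpose_mat U *\<^sub>v v) $ j"
proof -
  have "col (first_cols k U) j = col U j" using U j unfolding first_cols_def by (intro eq_vecI) auto
  then show ?thesis using U j unfolding first_cols_def by simp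
qed

lemma transpose_last_cols_mult_vec_index:
  assumes U: "U \<in> carrier_mat m m" and v: "v \<in> carrier_vec m" and j: "k \<le> j" "j < m"
  shows "(transpose_mat (last_cols k U) *\<^sub>v v) $ (j - k) = (transpose_mat U *\<^sub>v v) $ j"
proof -
  have "col (last_cols k U) (j - k) = col U j" using U j unfolding last_cols_def by (intro eq_vecI) auto
  then show ?thesis using U j unfolding last_cols_def by simp
qed

lemma sketch_coordinates:
  fixes U \<Phi> :: "real mat" and k m d i :: nat
  defines "\<Phi>\<^sub>1 \<equiv> transpose_mat (first_cols k U) * \<Phi>" and "\<Phi>\<^sub>2 \<equiv> transpose_mat (last_cols k U) * \<Phi>"
  assumes U: "U \<in> carrier_mat m m" and km: "k \<le> m" and Phi: "\<Phi> \<in> carrier_mat m d"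
    and rk: "vec_space.rank k \<Phi>\<^sub>1 = k" and i: "i < k"
  obtains z where "z \<in> carrier_vec d"
    and "\<And>j. j < k \<Longrightarrow> (transpose_mat U *\<^sub>v (\<Phi> *\<^sub>v z)) $ j = (if j = i then 1 else 0)"
    and "sqrt (\<Sum>j\<in>{k..<m}. ((transpose_mat U *\<^sub>v (\<Phi> *\<^sub>v z)) $ j)\<^sup>2) \<le> spec_norm (\<Phi>\<^sub>2 * pinv \<Phi>\<^sub>1)"
proof -
  have F1: "transpose_mat (first_cols k U) \<in> carrier_mat k m"
    and F2: "transpose_mat (last_cols k U) \<in> carrier_mat (m - k) m"
    using U unfolding first_cols_def last_cols_def by auto
  have P1: "\<Phi>\<^sub>1 \<in> carrier_mat k d" and P2: "\<Phi>\<^sub>2 \<in> carrier_mat (m - k) d"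
    unfolding \<Phi>\<^sub>1_def \<Phi>\<^sub>2_def using F1 F2 Phi by auto
  note X = pinv_right_inverse_of_full_row_rank[OF P1 rk]
  define e where "e = (unit_vec k i :: real vec)"
  define z where "z = pinv \<Phi>\<^sub>1 *\<^sub>v e"
  define w where "w = transpose_mat U *\<^sub>v (\<Phi> *\<^sub>v z)"
  have ec: "e \<in> carrier_vec k" and zc: "z \<in> carrier_vec d" and Phiz: "\<Phi> *\<^sub>v z \<in> carrier_vec m"
    unfolding z_def e_def using X(1) Phi by auto
  have "\<Phi>\<^sub>1 *\<^sub>v z = e" unfolding z_def using X P1 ec by (simp add: assoc_mult_mat_vec[symmetric])
  then have lead: "w $ j = (if j = i then 1 else 0)" if j: "j < k" for j
    using transpose_first_cols_mult_vec_index[OF U km Phiz j] j i F1 Phi zc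
    unfolding w_def e_def \<Phi>\<^sub>1_def by (simp add: assoc_mult_mat_vec)
  have "(\<Sum>j\<in>{k..<m}. (w $ j)\<^sup>2) = (\<Sum>l\<in>{0..<m - k}. (w $ (l + k))\<^sup>2)"
    using km sum.shift_bounds_nat_ivl[of "\<lambda>j. (w $ j)\<^sup>2" 0 k "m - k"] by simp
  also have "\<dots> = (\<Sum>l\<in>{0..<m - k}. ((\<Phi>\<^sub>2 *\<^sub>v z) $ l)\<^sup>2)"
  proof (intro sum.cong refl)
    fix l assume "l \<in> {0..<m - k}"
    then show "(w $ (l + k))\<^sup>2 = ((\<Phi>\<^sub>2 *\<^sub>v z) $ l)\<^sup>2"
      using transpose_last_cols_mult_vec_index[OF U Phiz, of k "l + k"]
      unfolding w_def \<Phi>\<^sub>2_def assoc_mult_mat_vec[OF F2 Phi zc] by simp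
  qed
  also have "\<dots> = (vnorm (\<Phi>\<^sub>2 *\<^sub>v z))\<^sup>2"
    unfolding vnorm_power2 scalar_prod_def using P2 by (simp add: power2_eq_square)
  finally have "sqrt (\<Sum>j\<in>{k..<m}. (w $ j)\<^sup>2) = vnorm (\<Phi>\<^sub>2 *\<^sub>v z)" using vnorm_nonneg by simp
  also have "\<dots> \<le> spec_norm (\<Phi>\<^sub>2 * pinv \<Phi>\<^sub>1)"
    using vnorm_mult_le_spec_norm[OF mult_carrier_mat[OF P2 X(1)] ec] vnorm_unit_vec[OF i]
      P2 X(1) ec unfolding z_def e_def by (simp add: assoc_mult_mat_vec)
  finally have "sqrt (\<Sum>j\<in>{k..<m}. (w $ j)\<^sup>2) \<le> spec_norm (\<Phi>\<^sub>2 * pinv \<Phi>\<^sub>1)" .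
  from that[OF zc lead[unfolded w_def] this[unfolded w_def]] show thesis .
qed

lemma sin_angle_sketch_le:
  fixes Om W U \<Phi> :: "real mat" and f :: "nat \<Rightarrow> real" and si sk gam :: real
    and r c m d k i a :: nat
  defines "\<Phi>\<^sub>1 \<equiv> transpose_mat (first_cols k U) * \<Phi>" and "\<Phi>\<^sub>2 \<equiv> transpose_mat (last_cols k U) * \<Phi>"
  defines "t \<equiv> spec_norm (\<Phi>\<^sub>2 * pinv \<Phi>\<^sub>1)"
  assumes Om: "Om \<in> carrier_mat r r" "orthonormal_cols Om"
    and W: "W \<in> carrier_mat r c" "orthonormal_cols W"
    and U: "U \<in> carrier_mat m m" and Phi: "\<Phi> \<in> carrier_mat m d" and rk: "vec_space.rank k \<Phi>\<^sub>1 = k"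
    and kr: "k \<le> r" and rm: "r \<le> m" and i: "i < k"
    and range: "col_space (Om * rect_diag r m f * transpose_mat U * \<Phi>) \<subseteq> col_space W"
    and si: "0 < si" and gam: "0 \<le> gam" "gam \<le> sk / si"
    and fi: "f i = si ^ a" and fj: "\<And>j. k \<le> j \<Longrightarrow> j < r \<Longrightarrow> \<bar>f j\<bar> \<le> sk ^ a"
  shows "sin_angle (col_space W) (col Om i) \<le> (sk / si) ^ a * t / sqrt (1 + gam ^ (2 * a) * t\<^sup>2)"
proof -
  have km: "k \<le> m" using kr rm by simp
  obtain z where z: "z \<in> carrier_vec d"
    and lead: "\<And>j. j < k \<Longrightarrow> (transpose_mat U *\<^sub>v (\<Phi> *\<^sub>v z)) $ j = (if j = i then 1 else 0)"
    and tail: "sqrt (\<Sum>j\<in>{k..<m}. ((transpose_mat U *\<^sub>v (\<Phi> *\<^sub>v z)) $ j)\<^sup>2) \<le> t"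
    by (rule sketch_coordinates[OF U km Phi rk[unfolded \<Phi>\<^sub>1_def] i])
      (simp_all add: t_def \<Phi>\<^sub>1_def \<Phi>\<^sub>2_def)
  define w where "w = transpose_mat U *\<^sub>v (\<Phi> *\<^sub>v z)"
  define D where "D = rect_diag r m f"
  have Dc: "D \<in> carrier_mat r m" and Ut: "transpose_mat U \<in> carrier_mat m m"
    and Phiz: "\<Phi> *\<^sub>v z \<in> carrier_vec m" and w: "w \<in> carrier_vec m"
    unfolding D_def w_def using U Phi z by auto
  have "(Om * D * transpose_mat U * \<Phi>) *\<^sub>v z = Om *\<^sub>v (D *\<^sub>v w)"
    unfolding w_def
    using assoc_mult_mat_vec[OF mult_carrier_mat[OF mult_carrier_mat[OF Om(1) Dc] Ut] Phi z]
      assoc_mult_mat_vec[OF mult_carrier_mat[OF Om(1) Dc] Ut Phiz]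
      assoc_mult_mat_vec[OF Om(1) Dc mult_mat_vec_carrier[OF Ut Phiz]] by simp
  moreover note M = mult_carrier_mat[OF mult_carrier_mat[OF mult_carrier_mat[OF Om(1) Dc] Ut] Phi]
  ultimately have y: "Om *\<^sub>v (D *\<^sub>v w) \<in> col_space W"
    using range mult_mat_vec_in_col_space[OF M z] unfolding D_def by auto
  have "transpose_mat Om *\<^sub>v (Om *\<^sub>v (D *\<^sub>v w)) = D *\<^sub>v w"
    using assoc_mult_mat_vec[OF transpose_carrier_mat[THEN iffD2, OF Om(1)] Om(1)
        mult_mat_vec_carrier[OF Dc w]] orthonormal_colsD[OF Om] Dc w by simp
  then have g: "(transpose_mat Om *\<^sub>v (Om *\<^sub>v (D *\<^sub>v w))) $ j = f j * w $ j" if "j < r" for j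
    unfolding D_def using rect_diag_mult_vec_index[OF w] that rm by simp
  have "0 \<le> sqrt (\<Sum>j\<in>{k..<m}. ((transpose_mat U *\<^sub>v (\<Phi> *\<^sub>v z)) $ j)\<^sup>2)"
    by (intro real_sqrt_ge_zero sum_nonneg) auto
  then have t: "0 \<le> t" using tail by linarith
  have "sin_angle (col_space W) (col Om i) \<le> (sk / si) ^ a * t / sqrt (1 + (gam ^ a * t)\<^sup>2)"
  proof (rule sin_angle_col_le_of_coordinates[OF Om W _ y])
    show "(transpose_mat Om *\<^sub>v (Om *\<^sub>v (D *\<^sub>v w))) $ i = si ^ a"
      using g[of i] lead[of i] fi i kr unfolding w_def by simp
    have "(\<Sum>j\<in>{0..<r}-{i}. ((transpose_mat Om *\<^sub>v (Om *\<^sub>v (D *\<^sub>v w))) $ j)\<^sup>2)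
        \<le> (sk ^ a)\<^sup>2 * (\<Sum>j\<in>{k..<m}. (w $ j)\<^sup>2)"
      using i kr rm g lead fj unfolding w_def by (intro sum_power2_remove_le) auto
    also have "\<dots> \<le> (sk ^ a)\<^sup>2 * t\<^sup>2"
      using sqrt_le_D[OF tail] unfolding w_def by (intro mult_left_mono) auto
    also have "\<dots> = (si ^ a * ((sk / si) ^ a * t))\<^sup>2"
      using si by (simp add: power_mult_distrib power_divide)
    finally show "(\<Sum>j\<in>{0..<r}-{i}. ((transpose_mat Om *\<^sub>v (Om *\<^sub>v (D *\<^sub>v w))) $ j)\<^sup>2)
        \<le> (si ^ a * ((sk / si) ^ a * t))\<^sup>2" .
    show "gam ^ a * t \<le> (sk / si) ^ a * t" using gam t by (intro mult_right_mono power_mono) auto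
  qed (use i kr si gam t in auto)
  also have "(gam ^ a * t)\<^sup>2 = gam ^ (2 * a) * t\<^sup>2"
    by (simp add: power_mult_distrib power_mult[symmetric] mult.commute)
  finally show ?thesis .
qed

theorem theorem4:
  fixes A U V \<Phi> Pbar Q R Ptil Rtil P L :: "real mat"
    and \<sigma> :: "nat \<Rightarrow> real"
    and m n k p d q :: nat
  assumes dims: "n \<le> m" "1 \<le> k" "1 \<le> p" "d = k + p" "d < n"
    and A_carr: "A \<in> carrier_mat m n"
    (* full SVD A = U Sigma V^T; sigma i (0-based) is sigma_{i+1} *)
    and U_carr: "U \<in> carrier_mat m m" and U_orth: "orthonormal_cols U"
    and V_carr: "V \<in> carrier_mat n n" and V_orth: "orthonormal_cols V"
    and sv_mono: "\<And>i j. i \<le> j \<Longrightarrow> j < n \<Longrightarrow> \<sigma> j \<le> \<sigma> i"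
    and sv_nonneg: "\<sigma> (n - 1) \<ge> 0"
    and svd: "A = U * rect_diag m n \<sigma> * transpose_mat V"
    and sk_pos: "\<sigma> (k - 1) > 0"
    and Phi_carr: "\<Phi> \<in> carrier_mat m d"
    and Pbar_carr: "Pbar \<in> carrier_mat n d" and Pbar_orth: "orthonormal_cols Pbar"
    and Pbar_range: "col_space Pbar =
          col_space ((transpose_mat A * A) ^\<^sub>m q * transpose_mat A * \<Phi>)"
    and Q_carr: "Q \<in> carrier_mat m d" and Q_orth: "orthonormal_cols Q"
    and R_carr: "R \<in> carrier_mat d d" and R_upper: "upper_triangular R"
    and QR: "A * Pbar = Q * R"
    and Ptil_carr: "Ptil \<in> carrier_mat d d" and Ptil_orth: "orthonormal_cols Ptil"
    and Rtil_carr: "Rtil \<in> carrier_mat d d" and Rtil_upper: "upper_triangular Rtil"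
    and QR2: "transpose_mat R = Ptil * Rtil"
    and P_def: "P = Pbar * Ptil"
    and L_def: "L = transpose_mat Rtil"
    and rank_Phi1: "vec_space.rank k (transpose_mat (first_cols k U) * \<Phi>) = k"
  shows "\<forall>i < k.
     (let Phi1 = transpose_mat (first_cols k U) * \<Phi>;
          Phi2 = transpose_mat (last_cols k U) * \<Phi>;
          t = spec_norm (Phi2 * pinv Phi1);
          \<delta> = \<sigma> k / \<sigma> i;
          \<gamma> = \<sigma> (n - 1) / \<sigma> 0
      in sin_angle (col_space Q) (col U i)
           \<le> \<delta> ^ (2*q+2) * t / sqrt (1 + \<gamma> ^ (4*q+4) * t\<^sup>2)
       \<and> sin_angle (col_space P) (col V i)
           \<le> \<delta> ^ (2*q+1) * t / sqrt (1 + \<gamma> ^ (4*q+2) * t\<^sup>2))"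
proof -
  define t where
    "t = spec_norm (transpose_mat (last_cols k U) * \<Phi> * pinv (transpose_mat (first_cols k U) * \<Phi>))"
  define \<gamma> where "\<gamma> = \<sigma> (n - 1) / \<sigma> 0"
  have kn: "k < n" and km: "k \<le> m" using dims by auto
  define M where "M = (transpose_mat A * A) ^\<^sub>m q * transpose_mat A"
  note factors = svd_power_factors[OF U_carr U_orth V_carr V_orth svd, of q, folded M_def]
  have M: "M \<in> carrier_mat n m" unfolding M_def using A_carr by auto
  have sketch: "col_space (M * \<Phi>) = col_space Pbar" using Pbar_range unfolding M_def ..
  have range_Q: "col_space (U * rect_diag m m (\<lambda>j. if j < n then \<sigma> j ^ (2 * q + 2) else 0)
      * transpose_mat U * \<Phi>) \<subseteq> col_space Q"
    unfolding factors(2)[symmetric] assoc_mult_mat[OF A_carr M Phi_carr]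
    by (rule col_space_mult_subset_of_qr[OF A_carr mult_carrier_mat[OF M Phi_carr] Pbar_carr Q_carr
          R_carr sketch QR])
  have range_P: "col_space (V * rect_diag n m (\<lambda>j. if j < n then \<sigma> j ^ (2 * q + 1) else 0)
      * transpose_mat U * \<Phi>) \<subseteq> col_space P"
    unfolding factors(1)[symmetric] sketch P_def
    by (rule col_space_subset_mult_orthonormal[OF Pbar_carr Ptil_carr Ptil_orth])
  have P: "P \<in> carrier_mat n d" unfolding P_def using Pbar_carr Ptil_carr by auto
  have P_orth: "orthonormal_cols P"
    unfolding P_def by (rule orthonormal_cols_mult[OF Pbar_carr Pbar_orth Ptil_carr Ptil_orth])
  have exps: "4 * q + 4 = 2 * (2 * q + 2)" "4 * q + 2 = 2 * (2 * q + 1)" by simp_all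
  have "sin_angle (col_space Q) (col U i) \<le> (\<sigma> k / \<sigma> i) ^ (2 * q + 2) * t / sqrt (1 + \<gamma> ^ (4 * q + 4) * t\<^sup>2)
      \<and> sin_angle (col_space P) (col V i) \<le> (\<sigma> k / \<sigma> i) ^ (2 * q + 1) * t / sqrt (1 + \<gamma> ^ (4 * q + 2) * t\<^sup>2)"
    if i: "i < k" for i
  proof -
    have "\<sigma> (k - 1) \<le> \<sigma> i" using i kn by (intro sv_mono) auto
    then have si: "0 < \<sigma> i" using sk_pos by simp
    note gam = nonincreasing_ratio_le[of n \<sigma>, OF sv_mono sv_nonneg less_imp_le[OF i] kn si]
    have sv_le: "\<bar>if j < n then \<sigma> j ^ a else 0\<bar> \<le> \<sigma> k ^ a" if "k \<le> j" "j < r" for j r a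
      using nonincreasing_power_le[of n \<sigma>, OF sv_mono sv_nonneg that(1) kn] .
    show ?thesis
      unfolding t_def \<gamma>_def exps using i kn
      by (intro conjI sin_angle_sketch_le[OF U_carr U_orth Q_carr Q_orth U_carr Phi_carr rank_Phi1
            km order_refl i range_Q si gam _ sv_le]
          sin_angle_sketch_le[OF V_carr V_orth P P_orth U_carr Phi_carr rank_Phi1
            less_imp_le[OF kn] dims(1) i range_P si gam _ sv_le]) auto
  qed
  then show ?thesis unfolding Let_def t_def \<gamma>_def by blast
qed

end
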